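(* Let $(\mathfrak{g},\theta)$ be a nilpotent symplectic Lie algebra over $\mathbb{R}$ and let $\nabla$ be the affine structure on $\mathfrak{g}$ defined by the symplectic cocycle $\theta$, i.e. $\nabla(X,Y)$ is the unique vector with $\theta(\nabla(X,Y),Z)=-\theta(Y,[X,Z])$ for all $Z\in\mathfrak{g}$. Let $\widetilde{\mathfrak{g}}=\mathfrak{g}\oplus\mathbb{R}$ with bracket $[(X,\alpha),(Y,\lambda)]=([X,Y],\theta(X,Y))$; this is a nilpotent contact Lie algebra with center $Z(\widetilde{\mathfrak{g}})=\{0\}\oplus\mathbb{R}$ and $\widetilde{\mathfrak{g}}/Z(\widetilde{\mathfrak{g}})\cong\mathfrak{g}$. Let $\pi:\widetilde{\mathfrak{g}}\to\mathfrak{g}$, $\pi(X,\alpha)=X$. Suppose $\widetilde{\nabla}$ is an affine structure on $\widetilde{\mathfrak{g}}$ extending $\nabla$, in the sense that $\pi(\widetilde{\nabla}((X,0),(Y,0)))=\nabla(X,Y)$ for all $X,Y\in\mathfrak{g}$. Then $\pi(\widetilde{\nabla}((X,0),T))=0$ for all $X\in\mathfrak{g}$ and all $T\in Z(\widetilde{\mathfrak{g}})$.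
   Context: A symplectic Lie algebra is a Lie algebra with a nondegenerate skew-symmetric bilinear form $\theta$ satisfying $\theta([X,Y],Z)+\theta([Y,Z],X)+\theta([Z,X],Y)=0$. An affine structure on a Lie algebra $\mathfrak{h}$ over $\mathbb{R}$ is a bilinear map $\nabla:\mathfrak{h}\times\mathfrak{h}\to\mathfrak{h}$ with $\nabla(X,Y)-\nabla(Y,X)=[X,Y]$ and $\nabla(X,\nabla(Y,Z))-\nabla(Y,\nabla(X,Z))=\nabla([X,Y],Z)$ for all $X,Y,Z\in\mathfrak{h}$; the map $\nabla$ defined from $\theta$ in the claim is such a structure. A contact Lie algebra of dimension $2p+1$ is one admitting $\omega\in\mathfrak{g}^*$ with $\omega\wedge(d\omega)^p\neq0$. *)

theory Defs
  imports "HOL-Analysis.Analysis"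
begin

definition lie_algebra :: "('a::real_vector \<Rightarrow> 'a \<Rightarrow> 'a) \<Rightarrow> bool" where
  "lie_algebra br \<longleftrightarrow> bilinear br \<and> (\<forall>x. br x x = 0) \<and>
     (\<forall>x y z. br x (br y z) + br y (br z x) + br z (br x y) = 0)"

fun lower_central :: "('a::real_vector \<Rightarrow> 'a \<Rightarrow> 'a) \<Rightarrow> nat \<Rightarrow> 'a set" where
  "lower_central br 0 = UNIV"
| "lower_central br (Suc k) = span {br x y | x y. y \<in> lower_central br k}"

definition nilpotent_lie :: "('a::real_vector \<Rightarrow> 'a \<Rightarrow> 'a) \<Rightarrow> bool" where
  "nilpotent_lie br \<longleftrightarrow> lie_algebra br \<and> (\<exists>k. lower_central br k = {0})"

definition symplectic_form :: "('a::real_vector \<Rightarrow> 'a \<Rightarrow> 'a) \<Rightarrow> ('a \<Rightarrow> 'a \<Rightarrow> real) \<Rightarrow> bool" where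
  "symplectic_form br \<theta> \<longleftrightarrow> bilinear \<theta> \<and> (\<forall>x y. \<theta> x y = - \<theta> y x) \<and>
     (\<forall>x. (\<forall>y. \<theta> x y = 0) \<longrightarrow> x = 0) \<and>
     (\<forall>x y z. \<theta> (br x y) z + \<theta> (br y z) x + \<theta> (br z x) y = 0)"

definition affine_structure :: "('a::real_vector \<Rightarrow> 'a \<Rightarrow> 'a) \<Rightarrow> ('a \<Rightarrow> 'a \<Rightarrow> 'a) \<Rightarrow> bool" where
  "affine_structure br nab \<longleftrightarrow> bilinear nab \<and>
     (\<forall>x y. nab x y - nab y x = br x y) \<and>
     (\<forall>x y z. nab x (nab y z) - nab y (nab x z) = nab (br x y) z)"

definition ext_bracket :: "('a::real_vector \<Rightarrow> 'a \<Rightarrow> 'a) \<Rightarrow> ('a \<Rightarrow> 'a \<Rightarrow> real) \<Rightarrow>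
    ('a \<times> real) \<Rightarrow> ('a \<times> real) \<Rightarrow> ('a \<times> real)" where
  "ext_bracket br \<theta> p q = (br (fst p) (fst q), \<theta> (fst p) (fst q))"

end

theory Submission
  imports Defs
begin

(* Let E = (0,1) span the centre of the extension and write the components of tnab as
   tnab((X,0),(Y,0)) = (nab X Y, gamma X Y),  tnab((X,0),E) = tnab(E,(X,0)) = (mu X, delta X),
   tnab(E,E) = (epsilon, sigma); the claim is mu = 0.
   Left symmetry on three elements of g, combined with the left symmetry of nab itself, gives
   theta(X,Y) mu Z = gamma(Y,Z) mu X - gamma(X,Z) mu Y.  Hence mu Z <> 0 forces theta to have
   rank two, so g is two-dimensional; having a nonzero central element, it is abelian.
   For abelian g we have nab = 0, and left symmetry on (E,X,Y) gives scalar relations between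
   gamma, delta, epsilon and sigma which, together with the nondegeneracy of theta, force mu = 0. *)

lemma lie_algebra_antisym:
  assumes "lie_algebra br"
  shows "br y x = - br x y"
proof -
  have bbr: "bilinear br" and alt: "\<And>x. br x x = 0"
    using assms by (auto simp: lie_algebra_def)
  have "br y x + br x y = br (x + y) (x + y)"
    by (simp only: bilinear_ladd[OF bbr] bilinear_radd[OF bbr]) (simp add: alt algebra_simps)
  also have "\<dots> = 0" by (rule alt)
  finally show ?thesis by (simp add: eq_neg_iff_add_eq_0)
qed

lemma nilpotent_lie_center_nontrivial:
  fixes br :: "'a::real_vector \<Rightarrow> 'a \<Rightarrow> 'a" and x :: 'a
  assumes "nilpotent_lie br" and "x \<noteq> 0"
  shows "\<exists>z. z \<noteq> 0 \<and> (\<forall>y. br y z = 0)"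
proof -
  have "\<exists>k. lower_central br k = {0}"
    using assms(1) by (simp add: nilpotent_lie_def)
  then obtain k where k: "lower_central br k = {0}" ..
  have "x \<in> lower_central br 0" by simp
  then have "lower_central br 0 \<noteq> {0}" using assms(2) by blast
  then obtain j where j: "lower_central br j \<noteq> {0}" "lower_central br (Suc j) = {0}"
    using ex_least_nat_less[of "\<lambda>j. lower_central br j = {0}", OF k] by blast
  have "0 \<in> lower_central br j" by (cases j) (auto simp: span_zero)
  then obtain z where z: "z \<in> lower_central br j" "z \<noteq> 0" using j(1) by blast
  have "br y z \<in> lower_central br (Suc j)" for y
    using z(1) by (auto intro!: span_base)
  then show ?thesis using z(2) j(2) by blast
qed

definition wedge :: "('a \<Rightarrow> real) \<Rightarrow> ('a \<Rightarrow> real) \<Rightarrow> 'a \<Rightarrow> 'a \<Rightarrow> real" where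
  "wedge a b X Y = a X * b Y - a Y * b X"

locale symplectic_lie_algebra =
  fixes br :: "'a::real_vector \<Rightarrow> 'a \<Rightarrow> 'a"
    and \<theta> :: "'a \<Rightarrow> 'a \<Rightarrow> real"
  assumes lie: "lie_algebra br"
    and symplectic: "symplectic_form br \<theta>"
begin

lemma bilinear_br: "bilinear br"
  and br_self: "br X X = 0"
  and jacobi: "br X (br Y Z) + br Y (br Z X) + br Z (br X Y) = 0"
  using lie by (auto simp: lie_algebra_def)

lemma bilinear_\<theta>: "bilinear \<theta>"
  and \<theta>_antisym: "\<theta> Y X = - \<theta> X Y"
  and \<theta>_nondegenerate: "(\<And>Y. \<theta> X Y = 0) \<Longrightarrow> X = 0"
  using symplectic unfolding symplectic_form_def by blast+

lemmas br_simps = bilinear_ladd[OF bilinear_br] bilinear_radd[OF bilinear_br]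
  bilinear_lmul[OF bilinear_br] bilinear_rmul[OF bilinear_br]
  bilinear_lsub[OF bilinear_br] bilinear_rsub[OF bilinear_br]
  bilinear_lneg[OF bilinear_br] bilinear_rneg[OF bilinear_br]
  bilinear_lzero[OF bilinear_br] bilinear_rzero[OF bilinear_br]

lemmas \<theta>_simps = bilinear_ladd[OF bilinear_\<theta>] bilinear_radd[OF bilinear_\<theta>]
  bilinear_lmul[OF bilinear_\<theta>] bilinear_rmul[OF bilinear_\<theta>]
  bilinear_lsub[OF bilinear_\<theta>] bilinear_rsub[OF bilinear_\<theta>]
  bilinear_lneg[OF bilinear_\<theta>] bilinear_rneg[OF bilinear_\<theta>]
  bilinear_lzero[OF bilinear_\<theta>] bilinear_rzero[OF bilinear_\<theta>]

lemma \<theta>_self [simp]: "\<theta> X X = 0"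
  using \<theta>_antisym[of X X] by simp

lemma exists_\<theta>_eq_1:
  assumes "W \<noteq> 0"
  obtains V where "\<theta> W V = 1"
proof -
  obtain Y where Y: "\<theta> W Y \<noteq> 0" using \<theta>_nondegenerate assms by blast
  show ?thesis by (rule that[of "(1 / \<theta> W Y) *\<^sub>R Y"]) (use Y in \<open>simp add: \<theta>_simps\<close>)
qed

lemma nabla_left_symmetric:
  assumes nab: "\<And>X Y Z. \<theta> (nab X Y) Z = - \<theta> Y (br X Z)"
  shows "nab X (nab Y Z) - nab Y (nab X Z) = nab (br X Y) Z"
proof -
  have "\<theta> (nab X (nab Y Z) - nab Y (nab X Z) - nab (br X Y) Z) W = 0" for W
  proof -
    have "br Y (br X W) - br X (br Y W) + br (br X Y) W = 0"
      using jacobi[of X Y W] lie_algebra_antisym[OF lie, of W X]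
        lie_algebra_antisym[OF lie, of W "br X Y"]
      by (simp add: br_simps algebra_simps)
    then have "\<theta> Z (br Y (br X W) - br X (br Y W) + br (br X Y) W) = 0"
      by (simp add: \<theta>_simps)
    then show ?thesis by (simp add: \<theta>_simps nab)
  qed
  then have "nab X (nab Y Z) - nab Y (nab X Z) - nab (br X Y) Z = 0"
    by (rule \<theta>_nondegenerate)
  then show ?thesis by simp
qed

lemma wedge_span:
  assumes wedge: "\<theta> = wedge a b" and uv: "\<theta> u v = 1"
  shows "X = \<theta> X v *\<^sub>R u + \<theta> u X *\<^sub>R v"
proof -
  define R where "R = X - \<theta> X v *\<^sub>R u - \<theta> u X *\<^sub>R v"
  have "\<theta> R u = 0" "\<theta> R v = 0"
    using uv \<theta>_antisym[of X u] \<theta>_antisym[of u v] by (simp_all add: R_def \<theta>_simps)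
  then have "a R * b u - a u * b R = 0" "a R * b v - a v * b R = 0" "a u * b v - a v * b u = 1"
    using uv by (simp_all add: wedge wedge_def)
  then have "a R = 0" "b R = 0" by algebra+
  then have "\<theta> R Y = 0" for Y by (simp add: wedge wedge_def)
  then have "R = 0" by (rule \<theta>_nondegenerate)
  then show ?thesis by (simp add: R_def algebra_simps)
qed

lemma abelian_if_wedge:
  assumes "nilpotent_lie br" and "\<theta> = wedge a b"
  shows "br X Y = 0"
proof (cases "\<exists>x::'a. x \<noteq> 0")
  case False
  then show ?thesis by blast
next
  case True
  then obtain z where z: "z \<noteq> 0" "\<And>y. br y z = 0"
    using nilpotent_lie_center_nontrivial[OF assms(1)] by blast
  obtain v where v: "\<theta> z v = 1" using exists_\<theta>_eq_1[OF z(1)] by blast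
  have "br z y = 0" for y using z(2) lie_algebra_antisym[OF lie, of z y] by simp
  then have "br (\<theta> X v *\<^sub>R z + \<theta> z X *\<^sub>R v) (\<theta> Y v *\<^sub>R z + \<theta> z Y *\<^sub>R v) = 0"
    by (simp add: br_simps z(2) br_self)
  then show ?thesis
    using arg_cong2[where f = br, OF wedge_span[OF assms(2) v] wedge_span[OF assms(2) v]] by simp
qed

end

locale symplectic_affine_extension = symplectic_lie_algebra br \<theta>
  for br :: "'a::real_vector \<Rightarrow> 'a \<Rightarrow> 'a" and \<theta> +
  fixes nab :: "'a \<Rightarrow> 'a \<Rightarrow> 'a"
    and tnab :: "'a \<times> real \<Rightarrow> 'a \<times> real \<Rightarrow> 'a \<times> real"
  assumes nab_char: "\<And>X Y Z. \<theta> (nab X Y) Z = - \<theta> Y (br X Z)"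
    and affine: "affine_structure (ext_bracket br \<theta>) tnab"
    and extends: "\<And>X Y. fst (tnab (X, 0) (Y, 0)) = nab X Y"
begin

lemma bilinear_tnab: "bilinear tnab"
  and tnab_commutator: "tnab p q - tnab q p = ext_bracket br \<theta> p q"
  and tnab_left_symmetric:
    "tnab p (tnab q r) - tnab q (tnab p r) = tnab (ext_bracket br \<theta> p q) r"
  using affine unfolding affine_structure_def by blast+

lemmas tnab_simps = bilinear_ladd[OF bilinear_tnab] bilinear_radd[OF bilinear_tnab]
  bilinear_lmul[OF bilinear_tnab] bilinear_rmul[OF bilinear_tnab]
  bilinear_lzero[OF bilinear_tnab] bilinear_rzero[OF bilinear_tnab]

lemma nab_left_symmetric: "nab X (nab Y Z) - nab Y (nab X Z) = nab (br X Y) Z"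
  by (rule nabla_left_symmetric[OF nab_char])

lemma nab_zero [simp]: "nab 0 Y = 0" "nab X 0 = 0"
  by (rule \<theta>_nondegenerate, simp add: nab_char br_simps \<theta>_simps)+

definition \<gamma> :: "'a \<Rightarrow> 'a \<Rightarrow> real" where "\<gamma> X Y = snd (tnab (X, 0) (Y, 0))"
definition \<mu> :: "'a \<Rightarrow> 'a" where "\<mu> X = fst (tnab (X, 0) (0, 1))"
definition \<delta> :: "'a \<Rightarrow> real" where "\<delta> X = snd (tnab (X, 0) (0, 1))"
definition \<epsilon> :: 'a where "\<epsilon> = fst (tnab (0, 1) (0, 1))"
definition \<sigma> :: real where "\<sigma> = snd (tnab (0, 1) (0, 1))"

lemma components_zero [simp]: "\<gamma> 0 Y = 0" "\<gamma> X 0 = 0" "\<mu> 0 = 0" "\<delta> 0 = 0"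
  by (simp_all add: \<gamma>_def \<mu>_def \<delta>_def tnab_simps flip: zero_prod_def)

lemma linear_\<gamma>: "linear (\<gamma> X)"
proof (rule linearI)
  fix Y W :: 'a and c :: real
  have add: "(Y + W, 0) = (Y, 0) + (W, 0::real)" and scale: "(c *\<^sub>R Y, 0) = c *\<^sub>R (Y, 0::real)"
    by simp_all
  show "\<gamma> X (Y + W) = \<gamma> X Y + \<gamma> X W"
    unfolding \<gamma>_def add by (simp only: tnab_simps snd_add)
  show "\<gamma> X (c *\<^sub>R Y) = c *\<^sub>R \<gamma> X Y"
    unfolding \<gamma>_def scale by (simp only: tnab_simps snd_scaleR)
qed

lemma tnab_center_comm: "tnab (0, 1) (X, 0) = tnab (X, 0) (0, 1)"
proof -
  have "tnab (X, 0) (0, 1) - tnab (0, 1) (X, 0) = ext_bracket br \<theta> (X, 0) (0, 1)"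
    by (rule tnab_commutator)
  also have "\<dots> = 0"
    by (simp add: ext_bracket_def br_simps \<theta>_simps zero_prod_def)
  finally show ?thesis by simp
qed

lemma tnab_decompose:
  "tnab (X, l) (Y, m) =
    (nab X Y + m *\<^sub>R \<mu> X + l *\<^sub>R \<mu> Y + (l * m) *\<^sub>R \<epsilon>, \<gamma> X Y + m * \<delta> X + l * \<delta> Y + l * m * \<sigma>)"
proof -
  have "(X, l) = (X, 0) + l *\<^sub>R (0, 1)" "(Y, m) = (Y, 0) + m *\<^sub>R (0, 1)"
    by simp_all
  then have "tnab (X, l) (Y, m) = tnab ((X, 0) + l *\<^sub>R (0, 1)) ((Y, 0) + m *\<^sub>R (0, 1))"
    by (rule arg_cong2)
  also have "\<dots> = tnab (X, 0) (Y, 0) + m *\<^sub>R tnab (X, 0) (0, 1) + l *\<^sub>R tnab (0, 1) (Y, 0)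
      + (l * m) *\<^sub>R tnab (0, 1) (0, 1)"
    by (simp only: tnab_simps) (simp add: algebra_simps)
  finally show ?thesis
    by (simp add: tnab_center_comm prod_eq_iff extends \<gamma>_def \<mu>_def \<delta>_def \<epsilon>_def \<sigma>_def)
qed

lemma \<gamma>_commutator: "\<gamma> X Y - \<gamma> Y X = \<theta> X Y"
  using tnab_commutator[of "(X, 0)" "(Y, 0)"] by (simp add: tnab_decompose ext_bracket_def)

lemma \<theta>_scaleR_\<mu>: "\<theta> X Y *\<^sub>R \<mu> Z = \<gamma> Y Z *\<^sub>R \<mu> X - \<gamma> X Z *\<^sub>R \<mu> Y"
proof -
  have "fst (tnab (X, 0) (tnab (Y, 0) (Z, 0)) - tnab (Y, 0) (tnab (X, 0) (Z, 0)))
      = fst (tnab (ext_bracket br \<theta> (X, 0) (Y, 0)) (Z, 0))"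
    by (simp only: tnab_left_symmetric)
  then have "nab X (nab Y Z) + \<gamma> Y Z *\<^sub>R \<mu> X - (nab Y (nab X Z) + \<gamma> X Z *\<^sub>R \<mu> Y)
      = nab (br X Y) Z + \<theta> X Y *\<^sub>R \<mu> Z"
    by (simp add: tnab_decompose ext_bracket_def)
  then show ?thesis using nab_left_symmetric[of X Y Z] by (simp add: algebra_simps)
qed

lemma \<mu>_nab: "\<mu> (nab X Y) + \<gamma> X Y *\<^sub>R \<epsilon> = nab X (\<mu> Y) + \<delta> Y *\<^sub>R \<mu> X"
  and \<delta>_nab: "\<delta> (nab X Y) + \<gamma> X Y * \<sigma> = \<gamma> X (\<mu> Y) + \<delta> X * \<delta> Y"
proof -
  have "tnab (0, 1) (tnab (X, 0) (Y, 0)) - tnab (X, 0) (tnab (0, 1) (Y, 0))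
      = tnab (ext_bracket br \<theta> (0, 1) (X, 0)) (Y, 0)"
    by (rule tnab_left_symmetric)
  also have "\<dots> = 0"
    by (simp add: ext_bracket_def br_simps \<theta>_simps tnab_simps flip: zero_prod_def)
  finally have "(\<mu> (nab X Y) + \<gamma> X Y *\<^sub>R \<epsilon>, \<delta> (nab X Y) + \<gamma> X Y * \<sigma>)
      = (nab X (\<mu> Y) + \<delta> Y *\<^sub>R \<mu> X, \<gamma> X (\<mu> Y) + \<delta> X * \<delta> Y)"
    by (simp add: tnab_decompose zero_prod_def algebra_simps)
  then show "\<mu> (nab X Y) + \<gamma> X Y *\<^sub>R \<epsilon> = nab X (\<mu> Y) + \<delta> Y *\<^sub>R \<mu> X"
    and "\<delta> (nab X Y) + \<gamma> X Y * \<sigma> = \<gamma> X (\<mu> Y) + \<delta> X * \<delta> Y"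
    by simp_all
qed

lemma \<mu>_eq_0_if_\<gamma>_right_kernel:
  assumes "W \<noteq> 0" and ker: "\<And>X. \<gamma> X W = 0"
  shows "\<mu> Z = 0"
proof -
  obtain V where V: "\<theta> W V = 1" using exists_\<theta>_eq_1[OF assms(1)] .
  have \<gamma>W: "\<gamma> W X = \<theta> W X" for X using \<gamma>_commutator[of W X] ker[of X] by simp
  have "\<mu> W = 0" using \<theta>_scaleR_\<mu>[of W V W] by (simp add: V ker \<gamma>W)
  then have key: "\<theta> W Y *\<^sub>R \<mu> X = - \<theta> W X *\<^sub>R \<mu> Y" for X Y
    using \<theta>_scaleR_\<mu>[of W Y X] by (simp add: \<gamma>W)
  have "\<mu> V = - \<mu> V" using key[of V V] by (simp add: V)
  then have "(2::real) *\<^sub>R \<mu> V = 0" by (simp add: scaleR_2 eq_neg_iff_add_eq_0)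
  then have "\<mu> V = 0" by simp
  then show ?thesis using key[of V Z] by (simp add: V)
qed

lemma \<mu>_eq_0_if_\<mu>_scalar:
  assumes \<mu>: "\<And>Y. \<mu> Y = t *\<^sub>R Y"
  shows "\<mu> Z = 0"
proof (rule ccontr)
  assume "\<mu> Z \<noteq> 0"
  then have t: "t \<noteq> 0" and "Z \<noteq> 0" using \<mu>[of Z] by auto
  obtain V where V: "\<theta> Z V = 1" using exists_\<theta>_eq_1[OF \<open>Z \<noteq> 0\<close>] .
  have "\<theta> (\<theta> Z V *\<^sub>R \<mu> Z) V = \<theta> (\<gamma> V Z *\<^sub>R \<mu> Z - \<gamma> Z Z *\<^sub>R \<mu> V) V"
    by (simp only: \<theta>_scaleR_\<mu>)
  then have "\<gamma> V Z = 1" using t by (simp add: \<mu> V \<theta>_simps)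
  moreover have "\<theta> Z (\<theta> Z V *\<^sub>R \<mu> V) = \<theta> Z (\<gamma> V V *\<^sub>R \<mu> Z - \<gamma> Z V *\<^sub>R \<mu> V)"
    by (simp only: \<theta>_scaleR_\<mu>)
  then have "t = (- \<gamma> Z V) * t" by (simp add: \<mu> V \<theta>_simps)
  then have "\<gamma> Z V = -1" using t by (metis minus_equation_iff mult_cancel_right2)
  ultimately show False using \<gamma>_commutator[of Z V] V by simp
qed

lemma \<mu>_eq_0_if_\<delta>_eq_0:
  assumes \<delta>: "\<And>Y. \<delta> Y = 0"
  shows "\<mu> Z = 0"
proof (cases "\<exists>Y. \<mu> Y - \<sigma> *\<^sub>R Y \<noteq> 0")
  case True
  then obtain Y where Y: "\<mu> Y - \<sigma> *\<^sub>R Y \<noteq> 0" ..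
  have "\<gamma> X (\<mu> Y - \<sigma> *\<^sub>R Y) = 0" for X
    using \<delta>_nab[of X Y] by (simp add: \<delta> linear_diff[OF linear_\<gamma>] linear_scale[OF linear_\<gamma>] mult.commute)
  then show ?thesis using \<mu>_eq_0_if_\<gamma>_right_kernel[OF Y] by blast
next
  case False
  then show ?thesis using \<mu>_eq_0_if_\<mu>_scalar[of \<sigma>] by simp
qed

lemma nab_eq_0_if_abelian:
  assumes "\<And>X Y. br X Y = 0"
  shows "nab X Y = 0"
  by (rule \<theta>_nondegenerate) (simp add: nab_char assms \<theta>_simps)

lemma \<epsilon>_eq_0_if_abelian:
  assumes abelian: "\<And>X Y. br X Y = 0" and Y1: "\<delta> Y1 \<noteq> 0"
  shows "\<epsilon> = 0"
proof (rule ccontr)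
  assume \<epsilon>: "\<epsilon> \<noteq> 0"
  have nab0: "nab X Y = 0" for X Y using nab_eq_0_if_abelian abelian by blast
  have \<gamma>_scaleR_\<epsilon>: "\<gamma> X Y *\<^sub>R \<epsilon> = \<delta> Y *\<^sub>R \<mu> X" for X Y using \<mu>_nab[of X Y] by (simp add: nab0)
  define \<kappa> where "\<kappa> X = \<gamma> X Y1 / \<delta> Y1" for X
  have \<mu>\<kappa>: "\<mu> X = \<kappa> X *\<^sub>R \<epsilon>" for X
  proof -
    have "\<mu> X = inverse (\<delta> Y1) *\<^sub>R (\<delta> Y1 *\<^sub>R \<mu> X)" using Y1 by simp
    also have "\<dots> = \<kappa> X *\<^sub>R \<epsilon>" by (simp add: \<gamma>_scaleR_\<epsilon>[symmetric] \<kappa>_def divide_inverse mult.commute)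
    finally show ?thesis .
  qed
  have \<gamma>\<kappa>: "\<gamma> X Y = \<delta> Y * \<kappa> X" for X Y
    using \<gamma>_scaleR_\<epsilon>[of X Y] \<epsilon> by (simp add: \<mu>\<kappa>)
  have \<theta>\<kappa>: "\<theta> = wedge \<kappa> \<delta>"
    by (intro ext) (simp add: wedge_def \<gamma>_commutator[symmetric] \<gamma>\<kappa> mult.commute)
  have rel: "\<delta> \<epsilon> * \<kappa> X * \<kappa> Y + \<delta> X * \<delta> Y = \<sigma> * (\<delta> Y * \<kappa> X)" for X Y
  proof -
    have "\<gamma> X (\<mu> Y) = \<kappa> Y * (\<delta> \<epsilon> * \<kappa> X)"
      by (simp add: \<mu>\<kappa> linear_scale[OF linear_\<gamma>] \<gamma>\<kappa>[of X \<epsilon>])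
    then show ?thesis using \<delta>_nab[of X Y] \<gamma>\<kappa>[of X Y] by (simp add: nab0 algebra_simps)
  qed
  have "Y1 \<noteq> 0" using Y1 by auto
  then obtain V where V: "\<theta> Y1 V = 1" using exists_\<theta>_eq_1 by blast
  \<comment> \<open>The left-hand side of rel is symmetric in X and Y, so \<sigma> \<theta> = 0.\<close>
  have "\<sigma> * wedge \<kappa> \<delta> Y1 V = 0"
    using rel[of Y1 V] rel[of V Y1] unfolding wedge_def by algebra
  then have \<sigma>: "\<sigma> = 0" using V by (simp add: \<theta>\<kappa>)
  \<comment> \<open>Then rel at X = Y1 makes \<delta> a multiple of \<kappa>, so \<theta> = wedge \<kappa> \<delta> degenerates.\<close>
  define t where "t = - \<delta> \<epsilon> * \<kappa> Y1 / \<delta> Y1"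
  have "\<delta> Y = t * \<kappa> Y" for Y
    using rel[of Y1 Y] Y1 by (simp add: \<sigma> t_def field_simps)
  then have "\<theta> Y1 V = 0" by (simp add: \<theta>\<kappa> wedge_def)
  with V show False by simp
qed

lemma \<mu>_eq_0_if_abelian:
  assumes abelian: "\<And>X Y. br X Y = 0"
  shows "\<mu> Z = 0"
proof (cases "\<forall>Y. \<delta> Y = 0")
  case True
  then show ?thesis using \<mu>_eq_0_if_\<delta>_eq_0 by blast
next
  case False
  then obtain Y where Y: "\<delta> Y \<noteq> 0" by blast
  have "\<delta> Y *\<^sub>R \<mu> Z = 0"
    using \<mu>_nab[of Z Y] \<epsilon>_eq_0_if_abelian[OF abelian Y] by (simp add: nab_eq_0_if_abelian abelian)
  then show ?thesis using Y by simp
qed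

lemma \<theta>_wedge_if_\<mu>_ne_0:
  assumes "\<mu> Z \<noteq> 0"
  obtains a b where "\<theta> = wedge a b"
proof -
  obtain V where V: "\<theta> (\<mu> Z) V = 1" using exists_\<theta>_eq_1[OF assms] .
  have "\<theta> X Y = wedge (\<lambda>X. \<theta> (\<mu> X) V) (\<lambda>Y. \<gamma> Y Z) X Y" for X Y
  proof -
    have "\<theta> X Y = \<theta> (\<theta> X Y *\<^sub>R \<mu> Z) V" by (simp add: V \<theta>_simps)
    also have "\<dots> = wedge (\<lambda>X. \<theta> (\<mu> X) V) (\<lambda>Y. \<gamma> Y Z) X Y"
      by (simp add: \<theta>_scaleR_\<mu> \<theta>_simps wedge_def mult.commute)
    finally show ?thesis .
  qed
  then show ?thesis by (intro that ext)
qed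

lemma \<mu>_eq_0:
  assumes "nilpotent_lie br"
  shows "\<mu> Z = 0"
proof (rule ccontr)
  assume "\<mu> Z \<noteq> 0"
  then obtain a b where "\<theta> = wedge a b" by (rule \<theta>_wedge_if_\<mu>_ne_0)
  then have "br X Y = 0" for X Y using abelian_if_wedge[OF assms] by blast
  then have "\<mu> Z = 0" by (rule \<mu>_eq_0_if_abelian)
  with \<open>\<mu> Z \<noteq> 0\<close> show False ..
qed

end

theorem mainTheorem4:
  fixes br :: "'a::euclidean_space \<Rightarrow> 'a \<Rightarrow> 'a"
    and \<theta> :: "'a \<Rightarrow> 'a \<Rightarrow> real"
    and nab :: "'a \<Rightarrow> 'a \<Rightarrow> 'a"
    and tnab :: "('a \<times> real) \<Rightarrow> ('a \<times> real) \<Rightarrow> ('a \<times> real)"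
  assumes "nilpotent_lie br"
    and "symplectic_form br \<theta>"
    and "\<And>X Y Z. \<theta> (nab X Y) Z = - \<theta> Y (br X Z)"
    and "affine_structure (ext_bracket br \<theta>) tnab"
    and "\<And>X Y. fst (tnab (X, 0) (Y, 0)) = nab X Y"
  shows "\<forall>X t. fst (tnab (X, 0) (0, t)) = 0"
proof -
  interpret symplectic_affine_extension br \<theta> nab tnab
    by unfold_locales (use assms in \<open>simp_all add: nilpotent_lie_def\<close>)
  show ?thesis by (simp add: tnab_decompose \<mu>_eq_0[OF assms(1)])
qed

end
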